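(* Let $n\ge3$ be odd and let $0<q<q_o$, where $q_o=\frac{\sqrt{414-66\sqrt{33}}}{16}\approx0.3690$. Let $\omega=(nq,\ldots,nq,-nq,\ldots,-nq,0)\in\mathbb{R}^n$ (with $(n-1)/2$ entries equal to $nq$, then $(n-1)/2$ entries equal to $-nq$, then a final entry $0$) and $k=(n,\ldots,n)$. Then the number of equilibria $\theta\in(-\pi,\pi]^n$ satisfying $$\omega_\nu=\frac1n\sum_{\mu=1}^nk_\nu k_\mu\sin(\theta_\nu-\theta_\mu)\ (\nu=1,\ldots,n),\qquad \sum_{\mu=1}^nk_\mu e^{i\theta_\mu}\in\mathbb{R}_{\ge0},$$ is $2^n-\binom{n-1}{(n-1)/2}$. *)

theory Defs
  imports Complex_Main
begin

definition kuramoto_equilibria ::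
  "nat \<Rightarrow> (nat \<Rightarrow> real) \<Rightarrow> (nat \<Rightarrow> real) \<Rightarrow> real list set" where
  "kuramoto_equilibria n \<omega> k =
     {\<theta>. length \<theta> = n \<and> (\<forall>\<nu><n. -pi < \<theta> ! \<nu> \<and> \<theta> ! \<nu> \<le> pi)
        \<and> (\<forall>\<nu><n. \<omega> \<nu> = (1 / real n) * (\<Sum>\<mu><n. k \<nu> * k \<mu> * sin (\<theta> ! \<nu> - \<theta> ! \<mu>)))
        \<and> (\<Sum>\<mu><n. complex_of_real (k \<mu>) * exp (\<i> * complex_of_real (\<theta> ! \<mu>))) \<in> complex_of_real ` {0..}}"

definition q_o :: real where
  "q_o = sqrt (414 - 66 * sqrt 33) / 16"

definition omega_alt :: "nat \<Rightarrow> real \<Rightarrow> nat \<Rightarrow> real" where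
  "omega_alt n q \<nu> =
     (if \<nu> < (n - 1) div 2 then real n * q
      else if \<nu> < n - 1 then - (real n * q) else 0)"

end

theory Submission
  imports Defs
begin

(*
  With uniform weights the coupling sum equals n times the imaginary part of e^(-i theta_nu) Z,
  Z = sum_mu e^(i theta_mu), so once Z is normalised to a nonnegative real R the equilibrium
  equations read omega_nu = n R sin theta_nu. Hence R > 0 and, with sin a = q / R, every
  oscillator of frequency nq sits at a or pi - a, every one of frequency -nq at -a or a - pi,
  and the last one at phi = 0 or pi. If A is the set of the 2m = n - 1 oscillators on the side
  of Z, then R = t cos a + cos phi with t = 2 (|A| - m), so equilibria correspond bijectively
  to triples (A, phi, a) with a in (0, pi/2) solving (t cos a + cos phi) sin a = q.
  A derivative computation shows that this equation has exactly one solution when phi = 0,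
  and two or none when phi = pi according as t > 0 or t <= 0; the bound q < q_o is exactly
  what produces the two solutions for t = 2. Summing over (A, phi) gives
  2^(2m) + 2 #{A. |A| > m} = 2^(2m+1) - (2m choose m).
*)

lemma DERIV_pos_imp_strict_mono_on:
  fixes f :: "real \<Rightarrow> real"
  assumes deriv: "\<And>x. (f has_real_derivative f' x) (at x)"
    and pos: "\<And>x. a < x \<Longrightarrow> x < b \<Longrightarrow> f' x > 0"
  shows "strict_mono_on {a..b} f"
proof (rule strict_mono_onI)
  fix x y assume xy: "x \<in> {a..b}" "y \<in> {a..b}" "x < y"
  show "f x < f y"
  proof (rule DERIV_pos_imp_increasing_open[OF \<open>x < y\<close>])
    fix z assume "x < z" "z < y"
    then show "\<exists>w. DERIV f z :> w \<and> w > 0"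
      using deriv pos xy by force
  next
    show "continuous_on {x..y} f"
      using deriv by (meson DERIV_isCont continuous_at_imp_continuous_on)
  qed
qed

lemma DERIV_neg_imp_strict_antimono_on:
  fixes f :: "real \<Rightarrow> real"
  assumes "\<And>x. (f has_real_derivative f' x) (at x)" and "\<And>x. a < x \<Longrightarrow> x < b \<Longrightarrow> f' x < 0"
  shows "strict_antimono_on {a..b} f"
proof -
  have "strict_mono_on {a..b} (\<lambda>x. - f x)"
    by (rule DERIV_pos_imp_strict_mono_on[where f' = "\<lambda>x. - f' x"])
       (use assms in \<open>auto intro: DERIV_minus\<close>)
  then show ?thesis by (auto simp: monotone_on_def)
qed

lemma strict_mono_on_level_set:
  fixes f :: "real \<Rightarrow> real"
  assumes "a \<le> b" and mono: "strict_mono_on {a..b} f" and "continuous_on {a..b} f"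
    and "f a < v" "v < f b"
  obtains r where "a < r" "r < b" "{x \<in> {a..b}. f x = v} = {r}"
proof -
  obtain r where r: "a \<le> r" "r \<le> b" "f r = v"
    using IVT'[of f a v b] assms by force
  have "{x \<in> {a..b}. f x = v} = {r}"
    using r by (auto intro: strict_mono_on_eqD[OF mono])
  moreover have "a < r" "r < b"
    using r assms(4,5) by (auto simp: order.order_iff_strict)
  ultimately show thesis using that by blast
qed

lemma strict_antimono_on_level_set:
  fixes f :: "real \<Rightarrow> real"
  assumes "a \<le> b" and "strict_antimono_on {a..b} f" and "continuous_on {a..b} f"
    and "v < f a" "f b < v"
  obtains r where "a < r" "r < b" "{x \<in> {a..b}. f x = v} = {r}"
proof -
  have "strict_mono_on {a..b} (\<lambda>x. - f x)"
    using assms(2) by (auto simp: monotone_on_def)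
  moreover have "continuous_on {a..b} (\<lambda>x. - f x)"
    using assms(3) by (intro continuous_intros)
  ultimately obtain r where "a < r" "r < b" "{x \<in> {a..b}. - f x = - v} = {r}"
    using strict_mono_on_level_set[of a b "\<lambda>x. - f x" "- v"] assms(1,4,5) by auto
  then show thesis using that by simp
qed

section \<open>The self-consistency equation\<close>

definition self_consistency :: "real \<Rightarrow> real \<Rightarrow> real \<Rightarrow> real" where
  "self_consistency t e a = (t * cos a + e) * sin a"

lemma self_consistency_0 [simp]: "self_consistency t e 0 = 0"
  and self_consistency_pi_half [simp]: "self_consistency t e (pi/2) = e"
  by (simp_all add: self_consistency_def)

lemma continuous_on_self_consistency: "continuous_on S (self_consistency t e)"
  unfolding self_consistency_def by (intro continuous_intros)

lemma self_consistency_has_real_derivative: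
  "(self_consistency t e has_real_derivative t * cos (2 * a) + e * cos a) (at a)"
proof -
  have "(self_consistency t e has_real_derivative
          (t * - sin a) * sin a + (t * cos a + e) * cos a) (at a)"
    unfolding self_consistency_def by (auto intro!: derivative_eq_intros)
  moreover have "(t * - sin a) * sin a + (t * cos a + e) * cos a = t * cos (2 * a) + e * cos a"
    unfolding cos_double by (simp add: algebra_simps power2_eq_square)
  ultimately show ?thesis by simp
qed

text \<open>In terms of \<open>x = cos a\<close> the derivative is \<open>2 t x\<^sup>2 + e x - t\<close>; multiplied by \<open>t\<close> it is
  negative at \<open>x = 0\<close> and positive at \<open>x = 1\<close>, and at a root \<open>y\<close> in between it factors as
  \<open>t (x - y) (2 x + 1 / y)\<close>.\<close>
lemma self_consistency_deriv_sign:
  fixes t e :: real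
  assumes "t * (t + e) > 0"
  obtains c where "0 < c" "c < pi/2"
    "\<And>a. 0 < a \<Longrightarrow> a < c \<Longrightarrow> t * (t * cos (2 * a) + e * cos a) > 0"
    "\<And>a. c < a \<Longrightarrow> a < pi/2 \<Longrightarrow> t * (t * cos (2 * a) + e * cos a) < 0"
proof -
  define p where "p x = t * (2 * t * x\<^sup>2 + e * x - t)" for x
  have "t \<noteq> 0" using assms by auto
  then have "0 < t\<^sup>2" by simp
  then have "p 0 < 0" by (simp add: p_def power2_eq_square)
  moreover have "p 1 > 0" using assms by (simp add: p_def algebra_simps)
  moreover have "continuous_on {0..1} p" unfolding p_def by (intro continuous_intros)
  ultimately obtain y where y: "0 \<le> y" "y \<le> 1" "p y = 0"
    using IVT'[of p 0 0 1] by force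
  with \<open>p 0 < 0\<close> \<open>p 1 > 0\<close> have "0 < y" "y < 1" by (auto simp: order.order_iff_strict)
  have root: "2 * t * y\<^sup>2 + e * y - t = 0" using y(3) \<open>t \<noteq> 0\<close> by (simp add: p_def)
  have factor: "t * (t * cos (2 * a) + e * cos a) = t\<^sup>2 * ((cos a - y) * (2 * cos a + 1 / y))" for a
  proof -
    have e: "e = (t - 2 * t * y\<^sup>2) / y" using root \<open>0 < y\<close> by (simp add: field_simps)
    show ?thesis
      unfolding cos_double_cos e using \<open>0 < y\<close> by (simp add: field_simps power2_eq_square)
  qed
  define c where "c = arccos y"
  have c: "0 < c" "c < pi/2" "cos c = y"
    unfolding c_def using \<open>0 < y\<close> \<open>y < 1\<close> arccos_lt_bounded[of y] arccos_less_arccos[of 0 y]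
    by (auto simp: arccos_0)
  show thesis
  proof (rule that[OF c(1,2)])
    fix a assume a: "0 < a" "a < c"
    then have "y < cos a" using c cos_mono_less_eq[of c a] by auto
    then show "t * (t * cos (2 * a) + e * cos a) > 0"
      unfolding factor using \<open>0 < t\<^sup>2\<close> \<open>0 < y\<close> by (simp add: add_pos_pos)
  next
    fix a assume a: "c < a" "a < pi/2"
    then have "cos a < y" "0 < cos a" using c cos_mono_less_eq[of a c] cos_gt_zero[of a] by auto
    then show "t * (t * cos (2 * a) + e * cos a) < 0"
      unfolding factor using \<open>0 < t\<^sup>2\<close> \<open>0 < y\<close>
      by (intro mult_pos_neg mult_neg_pos add_pos_pos) auto
  qed
qed

lemma self_consistency_rises_then_falls:
  assumes "t > 0" "t + e > 0"
  obtains c where "0 < c" "c < pi/2"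
    "strict_mono_on {0..c} (self_consistency t e)"
    "strict_antimono_on {c..pi/2} (self_consistency t e)"
proof -
  obtain c where c: "0 < c" "c < pi/2"
    and pos: "\<And>a. 0 < a \<Longrightarrow> a < c \<Longrightarrow> t * (t * cos (2 * a) + e * cos a) > 0"
    and neg: "\<And>a. c < a \<Longrightarrow> a < pi/2 \<Longrightarrow> t * (t * cos (2 * a) + e * cos a) < 0"
    using self_consistency_deriv_sign[of t e] assms by (auto simp: mult_pos_pos)
  show thesis
  proof (rule that[OF c])
    show "strict_mono_on {0..c} (self_consistency t e)"
      by (rule DERIV_pos_imp_strict_mono_on[OF self_consistency_has_real_derivative])
         (use pos assms(1) in \<open>simp add: zero_less_mult_iff\<close>)
    show "strict_antimono_on {c..pi/2} (self_consistency t e)"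
      by (rule DERIV_neg_imp_strict_antimono_on[OF self_consistency_has_real_derivative])
         (use neg assms(1) in \<open>simp add: mult_less_0_iff\<close>)
  qed
qed

lemma self_consistency_falls_then_rises:
  assumes "t < 0" "t + e < 0"
  obtains c where "0 < c" "c < pi/2"
    "strict_antimono_on {0..c} (self_consistency t e)"
    "strict_mono_on {c..pi/2} (self_consistency t e)"
proof -
  obtain c where c: "0 < c" "c < pi/2"
    and pos: "\<And>a. 0 < a \<Longrightarrow> a < c \<Longrightarrow> t * (t * cos (2 * a) + e * cos a) > 0"
    and neg: "\<And>a. c < a \<Longrightarrow> a < pi/2 \<Longrightarrow> t * (t * cos (2 * a) + e * cos a) < 0"
    using self_consistency_deriv_sign[of t e] assms by (auto simp: mult_neg_neg)
  show thesis
  proof (rule that[OF c])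
    show "strict_antimono_on {0..c} (self_consistency t e)"
      by (rule DERIV_neg_imp_strict_antimono_on[OF self_consistency_has_real_derivative])
         (use pos assms(1) in \<open>simp add: zero_less_mult_iff\<close>)
    show "strict_mono_on {c..pi/2} (self_consistency t e)"
      by (rule DERIV_pos_imp_strict_mono_on[OF self_consistency_has_real_derivative])
         (use neg assms(1) in \<open>simp add: mult_less_0_iff\<close>)
  qed
qed

definition locking_angles :: "real \<Rightarrow> real \<Rightarrow> real \<Rightarrow> real set" where
  "locking_angles t e q = {a \<in> {0<..<pi/2}. self_consistency t e a = q}"

lemma locking_angles_split:
  assumes "0 \<le> c" "c \<le> pi/2" "q \<noteq> 0" "q \<noteq> e"
  shows "locking_angles t e q =
    {a \<in> {0..c}. self_consistency t e a = q} \<union> {a \<in> {c..pi/2}. self_consistency t e a = q}"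
proof -
  have "a \<in> {0<..<pi/2} \<longleftrightarrow> a \<in> {0..c} \<union> {c..pi/2} \<and> a \<noteq> 0 \<and> a \<noteq> pi/2" for a
    using assms(1,2) by auto
  then show ?thesis
    using assms(3,4) self_consistency_0[of t e] self_consistency_pi_half[of t e]
    unfolding locking_angles_def by blast
qed

lemma locking_angles_plus_pos:
  assumes "t > 0" "0 < q" "q < 1"
  obtains r where "locking_angles t 1 q = {r}"
proof -
  obtain c where c: "0 < c" "c < pi/2"
    and mono: "strict_mono_on {0..c} (self_consistency t 1)"
    and anti: "strict_antimono_on {c..pi/2} (self_consistency t 1)"
    using self_consistency_rises_then_falls[of t 1] assms(1) by auto
  have high: "q < self_consistency t 1 a" if "c \<le> a" "a \<le> pi/2" for a
  proof (cases "a = pi/2")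
    case True
    show ?thesis unfolding True using assms(3) by simp
  next
    case False
    then have "self_consistency t 1 (pi/2) < self_consistency t 1 a"
      using monotone_onD[OF anti, of a "pi/2"] that c by simp
    then show ?thesis using assms(3) by simp
  qed
  obtain r where "{a \<in> {0..c}. self_consistency t 1 a = q} = {r}"
    by (rule strict_mono_on_level_set[OF _ mono continuous_on_self_consistency, of q])
       (use high[of c] c assms(2) in auto)
  moreover have "{a \<in> {c..pi/2}. self_consistency t 1 a = q} = {}"
    using high by fastforce
  moreover have "locking_angles t 1 q =
      {a \<in> {0..c}. self_consistency t 1 a = q} \<union> {a \<in> {c..pi/2}. self_consistency t 1 a = q}"
    by (rule locking_angles_split) (use c assms in auto)
  ultimately show thesis
    using that by (metis Un_empty_left Un_empty_right)
qed

lemma locking_angles_plus_neg: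
  assumes "t < -1" "0 < q" "q < 1"
  obtains r where "locking_angles t 1 q = {r}"
proof -
  obtain c where c: "0 < c" "c < pi/2"
    and anti: "strict_antimono_on {0..c} (self_consistency t 1)"
    and mono: "strict_mono_on {c..pi/2} (self_consistency t 1)"
    using self_consistency_falls_then_rises[of t 1] assms(1) by auto
  have low: "self_consistency t 1 a < q" if "0 \<le> a" "a \<le> c" for a
  proof (cases "a = 0")
    case False
    with that have "0 < a" by simp
    then have "self_consistency t 1 a < self_consistency t 1 0"
      using monotone_onD[OF anti, of 0 a] that c by simp
    then show ?thesis using assms(2) by simp
  qed (use assms(2) in simp)
  obtain r where "{a \<in> {c..pi/2}. self_consistency t 1 a = q} = {r}"
    by (rule strict_mono_on_level_set[OF _ mono continuous_on_self_consistency, of q])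
       (use low[of c] c assms(3) in auto)
  moreover have "{a \<in> {0..c}. self_consistency t 1 a = q} = {}"
    using low by fastforce
  moreover have "locking_angles t 1 q =
      {a \<in> {0..c}. self_consistency t 1 a = q} \<union> {a \<in> {c..pi/2}. self_consistency t 1 a = q}"
    by (rule locking_angles_split) (use c assms in auto)
  ultimately show thesis
    using that by (metis Un_empty_left Un_empty_right)
qed

lemma locking_angles_plus_zero:
  assumes "0 < q" "q < 1"
  shows "locking_angles 0 1 q = {arcsin q}"
proof -
  have "locking_angles 0 1 q = {a \<in> {0<..<pi/2}. sin a = q}"
    by (simp add: locking_angles_def self_consistency_def)
  also have "\<dots> = {a \<in> {0<..<pi/2}. a = arcsin q}"
    using arcsin_sin assms by force
  also have "\<dots> = {arcsin q}"
    using assms arcsin_less_arcsin[of 0 q] arcsin_lt_bounded[of q] by auto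
  finally show ?thesis .
qed

lemma locking_angles_minus_nonpos:
  assumes "t \<le> 0" "0 < q"
  shows "locking_angles t (-1) q = {}"
proof -
  have "self_consistency t (-1) a < 0" if "0 < a" "a < pi/2" for a
  proof -
    have "0 < sin a" "0 < cos a" using that by (auto intro: sin_gt_zero cos_gt_zero)
    then have "t * cos a - 1 < 0" using mult_nonpos_nonneg[of t "cos a"] assms(1) by simp
    then show ?thesis using \<open>0 < sin a\<close> by (simp add: self_consistency_def mult_neg_pos)
  qed
  then show ?thesis using assms(2) by (force simp: locking_angles_def)
qed

lemma locking_angles_minus_pos:
  assumes "t > 1" "0 < q" "0 < a\<^sub>0" "a\<^sub>0 < pi/2" "q < self_consistency t (-1) a\<^sub>0"
  obtains r\<^sub>1 r\<^sub>2 where "r\<^sub>1 < r\<^sub>2" "locking_angles t (-1) q = {r\<^sub>1, r\<^sub>2}"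
proof -
  obtain c where c: "0 < c" "c < pi/2"
    and mono: "strict_mono_on {0..c} (self_consistency t (-1))"
    and anti: "strict_antimono_on {c..pi/2} (self_consistency t (-1))"
    using self_consistency_rises_then_falls[of t "-1"] assms(1) by auto
  have "self_consistency t (-1) a\<^sub>0 \<le> self_consistency t (-1) c"
    using assms(3,4) c monotone_onD[OF mono, of a\<^sub>0 c] monotone_onD[OF anti, of c a\<^sub>0]
    by (cases a\<^sub>0 c rule: linorder_cases) auto
  then have top: "q < self_consistency t (-1) c" using assms(5) by simp
  obtain r\<^sub>1 where "r\<^sub>1 < c" "{a \<in> {0..c}. self_consistency t (-1) a = q} = {r\<^sub>1}"
    by (rule strict_mono_on_level_set[OF _ mono continuous_on_self_consistency, of q])
       (use top c assms(2) in auto)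
  moreover obtain r\<^sub>2 where "c < r\<^sub>2" "{a \<in> {c..pi/2}. self_consistency t (-1) a = q} = {r\<^sub>2}"
    by (rule strict_antimono_on_level_set[OF _ anti continuous_on_self_consistency, of q])
       (use top c assms(2) in auto)
  ultimately show thesis
    using that[of r\<^sub>1 r\<^sub>2] locking_angles_split[of c q "-1" t] c assms(2) by auto
qed

lemma sqrt_33_bounds: "5 < sqrt (33::real)" "sqrt (33::real) < 7"
  by (rule real_less_rsqrt, simp, rule real_sqrt_less_mono[of 33 49, simplified])

text \<open>\<open>q_o\<close> is the maximum of \<open>(2 cos a - 1) sin a\<close> on \<open>[0, pi/2]\<close>, attained at
  \<open>cos a = (1 + sqrt 33) / 8\<close>; only the value at that point is needed here.\<close>
lemma q_o_eq_self_consistency: "q_o = self_consistency 2 (-1) (arccos ((1 + sqrt 33) / 8))"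
proof -
  define s where "s = sqrt (33::real)"
  define x where "x = (1 + s) / 8"
  have s: "s\<^sup>2 = 33" "5 < s" "s < 7"
    using sqrt_33_bounds unfolding s_def by simp_all
  then have x: "0 < x" "x < 1" unfolding x_def by auto
  have "q_o = sqrt ((414 - 66 * s) / 256)"
    unfolding q_o_def s_def by (simp add: real_sqrt_divide)
  also have "(414 - 66 * s) / 256 = (2 * x - 1)\<^sup>2 * (1 - x\<^sup>2)"
    unfolding x_def using s(1) by (simp add: field_simps power2_eq_square)
  also have "sqrt \<dots> = (2 * x - 1) * sqrt (1 - x\<^sup>2)"
    using s(2) unfolding x_def by (simp add: real_sqrt_mult)
  also have "\<dots> = self_consistency 2 (-1) (arccos x)"
    using x by (simp add: self_consistency_def sin_arccos_abs)
  finally show ?thesis unfolding x_def s_def .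
qed

lemma q_o_less_one: "q_o < 1"
proof -
  have "414 - 66 * sqrt 33 < (256::real)"
    using sqrt_33_bounds by simp
  then have "sqrt (414 - 66 * sqrt 33) < sqrt 256"
    by (subst real_sqrt_less_iff) simp
  also have "sqrt 256 = (16::real)"
    by (simp add: real_sqrt_unique[of 16])
  finally show ?thesis unfolding q_o_def by simp
qed

lemma exists_self_consistency_minus_gt:
  assumes "t \<ge> 2" "q < q_o"
  obtains a where "0 < a" "a < pi/2" "q < self_consistency t (-1) a"
proof -
  define x where "x = (1 + sqrt 33) / 8"
  have x: "1/2 < x" "x < 1" using sqrt_33_bounds unfolding x_def by auto
  define a where "a = arccos x"
  have "0 < a" "a < pi/2"
    unfolding a_def using x arccos_lt_bounded[of x] arccos_less_arccos[of 0 x] by auto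
  moreover have "self_consistency 2 (-1) a \<le> self_consistency t (-1) a"
    using x assms(1) \<open>0 < a\<close> \<open>a < pi/2\<close> sin_gt_zero[of a]
    by (simp add: self_consistency_def a_def mult_right_mono)
  moreover have "q < self_consistency 2 (-1) a"
    using assms(2) unfolding q_o_eq_self_consistency a_def x_def .
  ultimately show thesis using that by auto
qed

lemma card_locking_angles_plus:
  assumes "0 < q" "q < 1"
  shows "card (locking_angles (2 * of_int j) 1 q) = 1"
proof -
  consider "j = 0" | "0 < j" | "j < 0" by linarith
  then obtain r where "locking_angles (2 * of_int j) 1 q = {r}"
  proof cases
    case 1
    then show thesis using that locking_angles_plus_zero[OF assms] by simp
  next
    case 2
    then have "0 < 2 * real_of_int j" by simp
    from locking_angles_plus_pos[OF this assms] that show thesis .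
  next
    case 3
    then have "2 * real_of_int j < -1" by simp
    from locking_angles_plus_neg[OF this assms] that show thesis .
  qed
  then show ?thesis by simp
qed

lemma card_locking_angles_minus:
  assumes "0 < q" "q < q_o"
  shows "finite (locking_angles (2 * of_int j) (-1) q)"
    and "card (locking_angles (2 * of_int j) (-1) q) = (if 0 < j then 2 else 0)"
proof -
  have "finite (locking_angles (2 * of_int j) (-1) q) \<and>
      card (locking_angles (2 * of_int j) (-1) q) = (if 0 < j then 2 else 0)"
  proof (cases "0 < j")
    case True
    then have "2 \<le> 2 * real_of_int j" by simp
    then obtain a where "0 < a" "a < pi/2" "q < self_consistency (2 * of_int j) (-1) a"
      using exists_self_consistency_minus_gt[OF _ assms(2)] by metis
    moreover have "1 < 2 * real_of_int j" using \<open>2 \<le> 2 * real_of_int j\<close> by simp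
    ultimately obtain r\<^sub>1 r\<^sub>2
      where "r\<^sub>1 < r\<^sub>2" "locking_angles (2 * of_int j) (-1) q = {r\<^sub>1, r\<^sub>2}"
      using locking_angles_minus_pos[OF _ assms(1)] by metis
    then show ?thesis using True by simp
  next
    case False
    then have "2 * real_of_int j \<le> 0" by simp
    then show ?thesis using locking_angles_minus_nonpos[OF _ assms(1)] False by simp
  qed
  then show "finite (locking_angles (2 * of_int j) (-1) q)"
    and "card (locking_angles (2 * of_int j) (-1) q) = (if 0 < j then 2 else 0)"
    by auto
qed

section \<open>Equilibria as locked states\<close>

lemma kuramoto_equilibria_uniform_iff:
  assumes "0 < N"
  shows "\<theta> \<in> kuramoto_equilibria N \<omega> (\<lambda>_. real N) \<longleftrightarrow>
    length \<theta> = N \<and> (\<forall>\<nu><N. - pi < \<theta> ! \<nu> \<and> \<theta> ! \<nu> \<le> pi)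
    \<and> (\<Sum>\<mu><N. sin (\<theta> ! \<mu>)) = 0 \<and> 0 \<le> (\<Sum>\<mu><N. cos (\<theta> ! \<mu>))
    \<and> (\<forall>\<nu><N. \<omega> \<nu> = real N * (\<Sum>\<mu><N. cos (\<theta> ! \<mu>)) * sin (\<theta> ! \<nu>))"
proof -
  define C where "C = (\<Sum>\<mu><N. cos (\<theta> ! \<mu>))"
  define S where "S = (\<Sum>\<mu><N. sin (\<theta> ! \<mu>))"
  have coupling: "1 / real N * (\<Sum>\<mu><N. real N * real N * sin (\<theta> ! \<nu> - \<theta> ! \<mu>))
      = real N * (sin (\<theta> ! \<nu>) * C - cos (\<theta> ! \<nu>) * S)" for \<nu>
    using assms
    by (simp add: C_def S_def sin_diff sum_distrib_left sum_subtractf algebra_simps)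
  have "(\<Sum>\<mu><N. complex_of_real (real N) * exp (\<i> * complex_of_real (\<theta> ! \<mu>)))
      = Complex (real N * C) (real N * S)"
    by (simp add: complex_eq_iff C_def S_def cis_conv_exp [symmetric] Re_sum Im_sum
        sum_distrib_left)
  moreover have "Complex x y \<in> complex_of_real ` {0..} \<longleftrightarrow> y = 0 \<and> 0 \<le> x" for x y
    by (auto simp: complex_eq_iff image_iff intro: exI[of _ x])
  ultimately have order_parameter:
    "(\<Sum>\<mu><N. complex_of_real (real N) * exp (\<i> * complex_of_real (\<theta> ! \<mu>)))
        \<in> complex_of_real ` {0..} \<longleftrightarrow> S = 0 \<and> 0 \<le> C"
    using assms by (simp add: zero_le_mult_iff)
  show ?thesis
    unfolding kuramoto_equilibria_def mem_Collect_eq coupling order_parameter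
    by (auto simp: C_def [symmetric] S_def [symmetric])
qed

abbreviation alt_equilibria :: "nat \<Rightarrow> real \<Rightarrow> real list set" where
  "alt_equilibria m q \<equiv>
     kuramoto_equilibria (Suc (2 * m)) (omega_alt (Suc (2 * m)) q) (\<lambda>_. real (Suc (2 * m)))"

lemma omega_alt_Suc_double:
  "omega_alt (Suc (2 * m)) q \<nu> =
     real (Suc (2 * m)) * (if \<nu> < m then q else if \<nu> < 2 * m then - q else 0)"
  by (simp add: omega_alt_def)

lemma alt_equilibria_iff:
  "\<theta> \<in> alt_equilibria m q \<longleftrightarrow>
    length \<theta> = Suc (2 * m) \<and> (\<forall>\<nu><Suc (2 * m). - pi < \<theta> ! \<nu> \<and> \<theta> ! \<nu> \<le> pi)
    \<and> (\<Sum>\<mu><Suc (2 * m). sin (\<theta> ! \<mu>)) = 0 \<and> 0 \<le> (\<Sum>\<mu><Suc (2 * m). cos (\<theta> ! \<mu>))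
    \<and> (\<forall>\<nu><Suc (2 * m). (\<Sum>\<mu><Suc (2 * m). cos (\<theta> ! \<mu>)) * sin (\<theta> ! \<nu>) =
          (if \<nu> < m then q else if \<nu> < 2 * m then - q else 0))"
  by (subst kuramoto_equilibria_uniform_iff) (auto simp: omega_alt_Suc_double)

definition locked_phase :: "nat \<Rightarrow> nat set \<Rightarrow> real \<Rightarrow> real \<Rightarrow> nat \<Rightarrow> real" where
  "locked_phase m A \<phi> a \<nu> =
     (if \<nu> < m then (if \<nu> \<in> A then a else pi - a)
      else if \<nu> < 2 * m then (if \<nu> \<in> A then - a else a - pi) else \<phi>)"

definition locked_state :: "nat \<Rightarrow> nat set \<Rightarrow> real \<Rightarrow> real \<Rightarrow> real list" where
  "locked_state m A \<phi> a = map (locked_phase m A \<phi> a) [0..<Suc (2 * m)]"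

lemma length_locked_state [simp]: "length (locked_state m A \<phi> a) = Suc (2 * m)"
  by (simp add: locked_state_def)

lemma nth_locked_state [simp]:
  "\<nu> < Suc (2 * m) \<Longrightarrow> locked_state m A \<phi> a ! \<nu> = locked_phase m A \<phi> a \<nu>"
  by (simp add: locked_state_def del: upt_Suc)

lemma sin_locked_phase:
  "sin (locked_phase m A \<phi> a \<nu>) = (if \<nu> < m then sin a else if \<nu> < 2 * m then - sin a else sin \<phi>)"
  by (simp add: locked_phase_def)

lemma cos_locked_phase:
  "cos (locked_phase m A \<phi> a \<nu>) =
     (if \<nu> < 2 * m then (if \<nu> \<in> A then cos a else - cos a) else cos \<phi>)"
  by (simp add: locked_phase_def)

lemma sum_locked_state:
  "(\<Sum>\<mu><Suc (2 * m). f (locked_state m A \<phi> a ! \<mu>)) =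
     (\<Sum>\<mu><2 * m. f (locked_phase m A \<phi> a \<mu>)) + f \<phi>"
  by (simp add: locked_phase_def)

lemma sum_sin_locked_state:
  "(\<Sum>\<mu><Suc (2 * m). sin (locked_state m A \<phi> a ! \<mu>)) = sin \<phi>"
proof -
  have "{..<2 * m} = {..<m} \<union> {m..<2 * m}" by auto
  then have "(\<Sum>\<mu><2 * m. sin (locked_phase m A \<phi> a \<mu>)) =
      (\<Sum>\<mu><m. sin (locked_phase m A \<phi> a \<mu>)) + (\<Sum>\<mu>=m..<2 * m. sin (locked_phase m A \<phi> a \<mu>))"
    by (metis finite_atLeastLessThan finite_lessThan ivl_disj_int_one(2) lessThan_atLeast0 sum.union_disjoint)
  also have "\<dots> = 0"
    by (simp add: sin_locked_phase)
  finally show ?thesis unfolding sum_locked_state by simp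
qed

lemma sum_cos_locked_state:
  assumes "A \<subseteq> {..<2 * m}"
  shows "(\<Sum>\<mu><Suc (2 * m). cos (locked_state m A \<phi> a ! \<mu>))
    = 2 * of_int (int (card A) - int m) * cos a + cos \<phi>"
proof -
  have "(\<Sum>\<mu><2 * m. cos (locked_phase m A \<phi> a \<mu>)) = (\<Sum>\<mu>\<in>A. cos a) + (\<Sum>\<mu>\<in>{..<2 * m} - A. - cos a)"
    using assms by (simp add: cos_locked_phase sum.If_cases Int_absorb1 Diff_eq)
  also have "\<dots> = real (card A) * cos a - (2 * real m - real (card A)) * cos a"
    using assms card_mono[OF _ assms] by (simp add: card_Diff_subset finite_subset of_nat_diff)
  finally show ?thesis unfolding sum_locked_state by (simp add: algebra_simps)
qed

lemma locked_state_mem_alt_equilibria: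
  assumes "0 < q" "A \<subseteq> {..<2 * m}" "\<phi> \<in> {0, pi}"
    and "a \<in> locking_angles (2 * of_int (int (card A) - int m)) (cos \<phi>) q"
  shows "locked_state m A \<phi> a \<in> alt_equilibria m q"
proof -
  define C where "C = (\<Sum>\<mu><Suc (2 * m). cos (locked_state m A \<phi> a ! \<mu>))"
  have a: "0 < a" "a < pi/2" and "C * sin a = q"
    using assms(4) sum_cos_locked_state[OF assms(2)]
    by (auto simp: locking_angles_def self_consistency_def C_def)
  moreover have "0 < sin a" using a by (intro sin_gt_zero) auto
  ultimately have "0 < C" using assms(1) by (metis zero_less_mult_pos2)
  have "sin \<phi> = 0" using assms(3) by auto
  then have "(\<Sum>\<mu><Suc (2 * m). sin (locked_state m A \<phi> a ! \<mu>)) = 0"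
    by (simp only: sum_sin_locked_state)
  then show ?thesis
    unfolding alt_equilibria_iff C_def [symmetric]
    using a \<open>0 < C\<close> \<open>C * sin a = q\<close> \<open>sin \<phi> = 0\<close> assms(3)
    by (auto simp: sin_locked_phase locked_phase_def)
qed

lemma sin_eq_sin_cases:
  fixes x a :: real
  assumes "- pi \<le> x" "x \<le> pi" "0 < a" "a \<le> pi/2" "sin x = sin a"
  shows "x = a \<or> x = pi - a"
proof -
  have "0 < sin x" using assms by (auto intro: sin_gt_zero)
  have "0 < x"
  proof (rule ccontr)
    assume "\<not> 0 < x"
    then have "0 \<le> sin (- x)" using assms(1) by (intro sin_ge_zero) auto
    then show False using \<open>0 < sin x\<close> by simp
  qed
  moreover have "x < pi" using assms(2) \<open>0 < sin x\<close> by (cases "x = pi") auto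
  ultimately show ?thesis
    using sin_inj_pi[of x a] sin_inj_pi[of "pi - x" a] assms by (cases "x \<le> pi/2") auto
qed

lemma eq_locked_state_if_phases:
  assumes "length \<theta> = Suc (2 * m)"
    and "\<forall>\<nu><m. \<theta> ! \<nu> = a \<or> \<theta> ! \<nu> = pi - a"
    and "\<forall>\<nu>\<in>{m..<2 * m}. \<theta> ! \<nu> = - a \<or> \<theta> ! \<nu> = a - pi"
  shows "\<theta> = locked_state m {\<nu>. \<nu> < 2 * m \<and> \<theta> ! \<nu> = (if \<nu> < m then a else - a)} (\<theta> ! (2 * m)) a"
proof (rule nth_equalityI)
  fix \<nu> assume "\<nu> < length \<theta>"
  then consider "\<nu> < m" | "m \<le> \<nu>" "\<nu> < 2 * m" | "\<nu> = 2 * m"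
    using assms(1) by linarith
  then show "\<theta> ! \<nu> = locked_state m {\<nu>. \<nu> < 2 * m \<and> \<theta> ! \<nu> = (if \<nu> < m then a else - a)} (\<theta> ! (2 * m)) a ! \<nu>"
    by cases (use assms(2,3) in \<open>auto simp: locked_phase_def\<close>)
qed (simp add: assms(1))

lemma locked_phase_eq_iff:
  assumes "\<nu> < 2 * m" "a < pi/2"
  shows "locked_phase m A \<phi> a \<nu> = (if \<nu> < m then a else - a) \<longleftrightarrow> \<nu> \<in> A"
  using assms by (auto simp: locked_phase_def)

lemma alt_equilibrium_phases:
  assumes "1 \<le> m" "0 < q" "\<theta> \<in> alt_equilibria m q"
  obtains a where "0 < a" "a \<le> pi/2" "(\<Sum>\<mu><Suc (2 * m). cos (\<theta> ! \<mu>)) * sin a = q"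
    "\<forall>\<nu><m. \<theta> ! \<nu> = a \<or> \<theta> ! \<nu> = pi - a"
    "\<forall>\<nu>\<in>{m..<2 * m}. \<theta> ! \<nu> = - a \<or> \<theta> ! \<nu> = a - pi"
    "\<theta> ! (2 * m) \<in> {0, pi}"
proof -
  define C where "C = (\<Sum>\<mu><Suc (2 * m). cos (\<theta> ! \<mu>))"
  have range: "\<And>\<nu>. \<nu> < Suc (2 * m) \<Longrightarrow> - pi < \<theta> ! \<nu> \<and> \<theta> ! \<nu> \<le> pi"
    and "0 \<le> C"
    and balance: "\<And>\<nu>. \<nu> < Suc (2 * m) \<Longrightarrow>
      C * sin (\<theta> ! \<nu>) = (if \<nu> < m then q else if \<nu> < 2 * m then - q else 0)"
    using assms(3) unfolding alt_equilibria_iff C_def by blast+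
  have "C * sin (\<theta> ! 0) = q" using balance[of 0] assms(1) by simp
  with \<open>0 \<le> C\<close> assms(2) have "0 < C" by (cases "C = 0") auto
  define a where "a = arcsin (q / C)"
  have "0 < q / C" using assms(2) \<open>0 < C\<close> by simp
  have "q / C = sin (\<theta> ! 0)" using \<open>C * sin (\<theta> ! 0) = q\<close> \<open>0 < C\<close> by auto
  then have "q / C \<le> 1" by simp
  with \<open>0 < q / C\<close> have a: "0 < a" "a \<le> pi/2" "C * sin a = q"
    unfolding a_def using arcsin_less_arcsin[of 0 "q / C"] arcsin_bounded[of "q / C"] \<open>0 < C\<close>
    by auto
  have sin_eq: "sin x = sin a \<longleftrightarrow> C * sin x = q" for x
    using a(3) \<open>0 < C\<close> by auto
  have plus: "\<forall>\<nu><m. \<theta> ! \<nu> = a \<or> \<theta> ! \<nu> = pi - a"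
  proof (intro allI impI)
    fix \<nu> assume "\<nu> < m"
    show "\<theta> ! \<nu> = a \<or> \<theta> ! \<nu> = pi - a"
    proof (rule sin_eq_sin_cases)
      show "sin (\<theta> ! \<nu>) = sin a" using balance[of \<nu>] \<open>\<nu> < m\<close> sin_eq by simp
    qed (use range[of \<nu>] \<open>\<nu> < m\<close> a in auto)
  qed
  have minus: "\<forall>\<nu>\<in>{m..<2 * m}. \<theta> ! \<nu> = - a \<or> \<theta> ! \<nu> = a - pi"
  proof
    fix \<nu> assume \<nu>: "\<nu> \<in> {m..<2 * m}"
    have "- (\<theta> ! \<nu>) = a \<or> - (\<theta> ! \<nu>) = pi - a"
    proof (rule sin_eq_sin_cases)
      show "sin (- (\<theta> ! \<nu>)) = sin a" using balance[of \<nu>] \<nu> sin_eq[of "- (\<theta> ! \<nu>)"] by simp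
    qed (use range[of \<nu>] \<nu> a in auto)
    then show "\<theta> ! \<nu> = - a \<or> \<theta> ! \<nu> = a - pi" by auto
  qed
  have "sin (\<theta> ! (2 * m)) = 0" using balance[of "2 * m"] \<open>0 < C\<close> by simp
  then have last: "\<theta> ! (2 * m) \<in> {0, pi}"
    using range[of "2 * m"] sin_eq_0_pi[of "\<theta> ! (2 * m)"] by (cases "\<theta> ! (2 * m) = pi") auto
  show thesis by (rule that[OF a(1,2) a(3)[unfolded C_def] plus minus last])
qed

lemma alt_equilibrium_is_locked_state:
  assumes "1 \<le> m" "0 < q" "q < 1" "\<theta> \<in> alt_equilibria m q"
  obtains A \<phi> a where "A \<subseteq> {..<2 * m}" "\<phi> \<in> {0, pi}"
    "a \<in> locking_angles (2 * of_int (int (card A) - int m)) (cos \<phi>) q"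
    "\<theta> = locked_state m A \<phi> a"
proof -
  obtain a where a: "0 < a" "a \<le> pi/2" "(\<Sum>\<mu><Suc (2 * m). cos (\<theta> ! \<mu>)) * sin a = q"
    and plus: "\<forall>\<nu><m. \<theta> ! \<nu> = a \<or> \<theta> ! \<nu> = pi - a"
    and minus: "\<forall>\<nu>\<in>{m..<2 * m}. \<theta> ! \<nu> = - a \<or> \<theta> ! \<nu> = a - pi"
    and last: "\<theta> ! (2 * m) \<in> {0, pi}"
    by (rule alt_equilibrium_phases[OF assms(1,2,4)])
  define A where "A = {\<nu>. \<nu> < 2 * m \<and> \<theta> ! \<nu> = (if \<nu> < m then a else - a)}"
  define \<phi> where "\<phi> = \<theta> ! (2 * m)"
  have "length \<theta> = Suc (2 * m)" using assms(4) unfolding alt_equilibria_iff by (rule conjunct1)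
  then have \<theta>: "\<theta> = locked_state m A \<phi> a"
    unfolding A_def \<phi>_def by (rule eq_locked_state_if_phases[OF _ plus minus])
  have A: "A \<subseteq> {..<2 * m}" by (auto simp: A_def)
  have C: "(\<Sum>\<mu><Suc (2 * m). cos (\<theta> ! \<mu>)) = 2 * of_int (int (card A) - int m) * cos a + cos \<phi>"
    by (subst \<theta>) (rule sum_cos_locked_state[OF A])
  have "\<phi> \<in> {0, pi}" using last by (simp add: \<phi>_def)
  have "a \<noteq> pi/2"
  proof
    assume "a = pi/2"
    then have "cos a = 0" "sin a = 1" by (simp_all only: cos_pi_half sin_pi_half)
    then have "cos \<phi> = q" using C a(3) by simp
    then show False using \<open>\<phi> \<in> {0, pi}\<close> assms(2,3) by auto
  qed
  with a(2) have "a < pi/2" by simp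
  then have "a \<in> locking_angles (2 * of_int (int (card A) - int m)) (cos \<phi>) q"
    using a C by (simp add: locking_angles_def self_consistency_def)
  from that[OF A \<open>\<phi> \<in> {0, pi}\<close> this \<theta>] show thesis .
qed

lemma locked_state_inject:
  assumes "1 \<le> m" "A \<subseteq> {..<2 * m}" "A' \<subseteq> {..<2 * m}"
    and "a \<in> {0<..<pi/2}" "a' \<in> {0<..<pi/2}"
    and eq: "locked_state m A \<phi> a = locked_state m A' \<phi>' a'"
  shows "A = A' \<and> \<phi> = \<phi>' \<and> a = a'"
proof -
  have nth: "locked_phase m A \<phi> a \<nu> = locked_phase m A' \<phi>' a' \<nu>" if "\<nu> < Suc (2 * m)" for \<nu>
    using arg_cong[OF eq, of "\<lambda>\<theta>. \<theta> ! \<nu>"] that by simp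
  have "sin a = sin a'"
    using arg_cong[OF nth[of 0], of sin] assms(1) by (simp add: sin_locked_phase)
  then have "a = a'" using assms(4,5) by (rule_tac sin_inj_pi) auto
  moreover have "\<phi> = \<phi>'"
    using nth[of "2 * m"] by (simp add: locked_phase_def)
  moreover have "\<nu> \<in> A \<longleftrightarrow> \<nu> \<in> A'" if "\<nu> < 2 * m" for \<nu>
  proof -
    have "a < pi/2" "a' < pi/2" using assms(4,5) by auto
    then have "\<nu> \<in> A \<longleftrightarrow> locked_phase m A \<phi> a \<nu> = (if \<nu> < m then a else - a)"
      using locked_phase_eq_iff[OF that] by blast
    also have "\<dots> \<longleftrightarrow> locked_phase m A' \<phi>' a' \<nu> = (if \<nu> < m then a' else - a')"
      using nth[of \<nu>] that \<open>a = a'\<close> by simp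
    also have "\<dots> \<longleftrightarrow> \<nu> \<in> A'"
      using locked_phase_eq_iff[OF that] \<open>a' < pi/2\<close> by blast
    finally show ?thesis .
  qed
  then have "A = A'" using assms(2,3) by blast
  ultimately show ?thesis by simp
qed

section \<open>Counting\<close>

lemma card_Pow_card_gt_half:
  assumes "finite S" "card S = 2 * m"
  shows "2 * card {A \<in> Pow S. m < card A} + (2 * m choose m) = 2 ^ (2 * m)"
proof -
  define G where "G = {A \<in> Pow S. m < card A}"
  define L where "L = {A \<in> Pow S. card A < m}"
  define M where "M = {A \<in> Pow S. card A = m}"
  have card_Diff: "card (S - A) = 2 * m - card A" if "A \<subseteq> S" for A
    using assms that by (simp add: card_Diff_subset finite_subset)
  have bound: "card A \<le> 2 * m" if "A \<subseteq> S" for A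
    using assms that card_mono by metis
  have "S - A \<in> L" if "A \<in> G" for A
    using that bound[of A] by (auto simp: G_def L_def card_Diff)
  moreover have "S - A \<in> G" if "A \<in> L" for A
    using that by (auto simp: G_def L_def card_Diff)
  ultimately have "bij_betw (\<lambda>A. S - A) G L"
    by (intro bij_betw_byWitness[where f' = "\<lambda>A. S - A"]) (auto simp: G_def L_def)
  then have "card G = card L" by (rule bij_betw_same_card)
  moreover have "Pow S = G \<union> L \<union> M" "G \<inter> L = {}" "(G \<union> L) \<inter> M = {}"
    by (auto simp: G_def L_def M_def)
  moreover have "finite G" "finite L" "finite M"
    using assms(1) by (simp_all add: G_def L_def M_def)
  ultimately have "2 ^ (2 * m) = 2 * card G + card M"
    using card_Pow[of S] assms by (simp add: card_Un_disjoint)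
  moreover have "card M = 2 * m choose m"
    using n_subsets[OF assms(1), of m] assms(2) by (simp add: M_def Pow_def)
  ultimately show ?thesis by (simp add: G_def)
qed

definition locking_parameters :: "nat \<Rightarrow> real \<Rightarrow> ((nat set \<times> real) \<times> real) set" where
  "locking_parameters m q =
     (SIGMA (A, \<phi>) : Pow {..<2 * m} \<times> {0, pi}.
        locking_angles (2 * of_int (int (card A) - int m)) (cos \<phi>) q)"

lemma alt_equilibria_eq_image:
  assumes "1 \<le> m" "0 < q" "q < 1"
  shows "alt_equilibria m q = (\<lambda>((A, \<phi>), a). locked_state m A \<phi> a) ` locking_parameters m q"
proof
  show "alt_equilibria m q \<subseteq> (\<lambda>((A, \<phi>), a). locked_state m A \<phi> a) ` locking_parameters m q"
  proof
    fix \<theta> assume "\<theta> \<in> alt_equilibria m q"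
    then obtain A \<phi> a where "A \<subseteq> {..<2 * m}" "\<phi> \<in> {0, pi}"
      "a \<in> locking_angles (2 * of_int (int (card A) - int m)) (cos \<phi>) q" "\<theta> = locked_state m A \<phi> a"
      using alt_equilibrium_is_locked_state[OF assms] by metis
    then show "\<theta> \<in> (\<lambda>((A, \<phi>), a). locked_state m A \<phi> a) ` locking_parameters m q"
      by (intro image_eqI[of _ _ "((A, \<phi>), a)"]) (simp_all add: locking_parameters_def)
  qed
  show "(\<lambda>((A, \<phi>), a). locked_state m A \<phi> a) ` locking_parameters m q \<subseteq> alt_equilibria m q"
    using locked_state_mem_alt_equilibria[OF assms(2)] by (auto simp: locking_parameters_def)
qed

lemma inj_on_locked_state:
  assumes "1 \<le> m"
  shows "inj_on (\<lambda>((A, \<phi>), a). locked_state m A \<phi> a) (locking_parameters m q)"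
proof (rule inj_onI)
  fix x y
  assume "x \<in> locking_parameters m q" "y \<in> locking_parameters m q"
    and eq: "(\<lambda>((A, \<phi>), a). locked_state m A \<phi> a) x = (\<lambda>((A, \<phi>), a). locked_state m A \<phi> a) y"
  moreover obtain A \<phi> a A' \<phi>' a' where "x = ((A, \<phi>), a)" "y = ((A', \<phi>'), a')"
    by (metis prod.collapse)
  ultimately show "x = y"
    using locked_state_inject[OF assms, of A A' a a' \<phi> \<phi>']
    by (simp add: locking_parameters_def locking_angles_def)
qed

lemma card_locking_parameters:
  assumes "0 < q" "q < q_o"
  shows "finite (locking_parameters m q)"
    and "card (locking_parameters m q) = 2 ^ (2 * m) + 2 * card {A \<in> Pow {..<2 * m}. m < card A}"
proof -
  have "q < 1" using assms(2) q_o_less_one by simp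
  define L :: "nat set \<times> real \<Rightarrow> real set"
    where "L = (\<lambda>(A, \<phi>). locking_angles (2 * of_int (int (card A) - int m)) (cos \<phi>) q)"
  have fiber: "finite (L (A, \<phi>)) \<and> card (L (A, \<phi>)) = (if \<phi> = 0 then 1 else if m < card A then 2 else 0)"
    if "\<phi> \<in> {0, pi}" for A \<phi>
  proof (cases "\<phi> = 0")
    case True
    then show ?thesis
      using card_locking_angles_plus[OF assms(1) \<open>q < 1\<close>, of "int (card A) - int m"]
      by (simp add: L_def card_ge_0_finite)
  next
    case False
    with that have "\<phi> = pi" by simp
    then show ?thesis
      using card_locking_angles_minus[OF assms, of "int (card A) - int m"] False
      by (simp add: L_def)
  qed
  have P: "locking_parameters m q = Sigma (Pow {..<2 * m} \<times> {0, pi}) L"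
    by (simp add: locking_parameters_def L_def)
  show "finite (locking_parameters m q)"
    unfolding P using fiber by (intro finite_SigmaI) auto
  have "card (locking_parameters m q) = (\<Sum>p \<in> Pow {..<2 * m} \<times> {0, pi}. card (L p))"
    unfolding P using fiber by (intro card_SigmaI) auto
  also have "\<dots> = (\<Sum>A \<in> Pow {..<2 * m}. \<Sum>\<phi> \<in> {0, pi}. card (L (A, \<phi>)))"
    unfolding sum.cartesian_product by (rule sum.cong) auto
  also have "\<dots> = (\<Sum>A \<in> Pow {..<2 * m}. 1 + (if m < card A then 2 else 0))"
    using fiber by (intro sum.cong) simp_all
  also have "\<dots> = (\<Sum>A \<in> Pow {..<2 * m}. 1) + (\<Sum>A \<in> Pow {..<2 * m}. if m < card A then 2 else 0)"
    by (rule sum.distrib)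
  also have "\<dots> = card (Pow {..<2 * m}) + (\<Sum>A \<in> {A \<in> Pow {..<2 * m}. m < card A}. 2)"
    by (subst sum.inter_filter) simp_all
  also have "\<dots> = 2 ^ (2 * m) + 2 * card {A \<in> Pow {..<2 * m}. m < card A}"
    by (simp add: card_Pow)
  finally show "card (locking_parameters m q) = 2 ^ (2 * m) + 2 * card {A \<in> Pow {..<2 * m}. m < card A}" .
qed

theorem theorem5:
  fixes n :: nat and q :: real
  assumes "odd n" and "n \<ge> 3" and "0 < q" and "q < q_o"
  shows "finite (kuramoto_equilibria n (omega_alt n q) (\<lambda>_. real n))
     \<and> card (kuramoto_equilibria n (omega_alt n q) (\<lambda>_. real n))
         = 2 ^ n - ((n - 1) choose ((n - 1) div 2))"
proof -
  obtain m where n: "n = Suc (2 * m)" using \<open>odd n\<close> by (metis oddE Suc_eq_plus1)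
  with \<open>n \<ge> 3\<close> have "1 \<le> m" by simp
  have "q < 1" using assms(4) q_o_less_one by simp
  have image: "kuramoto_equilibria n (omega_alt n q) (\<lambda>_. real n) =
      (\<lambda>((A, \<phi>), a). locked_state m A \<phi> a) ` locking_parameters m q"
    unfolding n by (rule alt_equilibria_eq_image[OF \<open>1 \<le> m\<close> assms(3) \<open>q < 1\<close>])
  have "card (kuramoto_equilibria n (omega_alt n q) (\<lambda>_. real n)) = card (locking_parameters m q)"
    unfolding image by (rule card_image[OF inj_on_locked_state[OF \<open>1 \<le> m\<close>]])
  also have "\<dots> = 2 ^ n - (2 * m choose m)"
    using card_locking_parameters(2)[OF assms(3,4)] card_Pow_card_gt_half[of "{..<2 * m}" m] n
    by simp
  finally show ?thesis
    using image card_locking_parameters(1)[OF assms(3,4)] n by simp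
qed

end
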